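(* Let $p$ be a prime, $C\subseteq\mathbb{F}_p^{2n}$ a symplectic self-orthogonal code with stabilizer code $Q(C)\subseteq\mathbb{C}^{p^n}$, and let $\emptyset\neq I\subsetneq J\subsetneq\{1,\dots,n\}$. If \[\sigma_I\left[\pi_J\left(C^{\perp_s}\right)\right]=\sigma_I(C),\] then $Q(C)$ is $(I,J)$-locally recoverable.
   Context: Vectors of $\mathbb{F}_p^{2n}$ are written $(\mathbf a|\mathbf b)$, $\mathbf a,\mathbf b\in\mathbb F_p^n$, coordinate pair $(a_j,b_j)$ indexed by $j\in\{1,\dots,n\}$. Symplectic form: $(\mathbf a|\mathbf b)\cdot_s(\mathbf c|\mathbf d)=\mathbf a\cdot\mathbf d-\mathbf b\cdot\mathbf c$; $C^{\perp_s}$ is the dual; $C$ is symplectic self-orthogonal if $C\subseteq C^{\perp_s}$. For $R\subseteq\{1,\dots,n\}$: $\pi_R(\mathbf a|\mathbf b)=(a_j|b_j)_{j\in R}$, puncturing $\pi_R(D)=\{\pi_R(\mathbf y):\mathbf y\in D\}$, shortening $\sigma_R(D)=\{\pi_R(\mathbf y):\mathbf y=(\mathbf a|\mathbf b)\in D,\ \mathrm{supp}(\mathbf a)\cup\mathrm{supp}(\mathbf b)\subseteq R\}$; for $I\subseteq J$ the shortening at $I$ of a code in $\mathbb F_p^{2|J|}$ (pairs indexed by $J$) is defined the same way. Quantum setting: $\xi=e^{2\pi\iota/p}$, $X(a)|x\rangle=|x+a\rangle$, $Z(b)|x\rangle=\xi^{bx}|x\rangle$ on $\mathbb C^p$, $E_{(\mathbf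 a,\mathbf b)}=\bigotimes_jX(a_j)Z(b_j)$. $Q(C)$ is the common eigenspace $\{v:Ev=\lambda(E)v\ \forall E\in S\}$, $S$ the commutative group generated by scalars $\xi^\ell\mathcal I$ and $E_{\mathbf y}$, $\mathbf y\in C$, $\lambda$ a character of $S$ with $\lambda(\xi\mathcal I)=\xi$. Let $\Gamma(\rho)=p^{-2}\sum_{a,b}X(a)Z(b)\rho (X(a)Z(b))^\dagger$, and $\Gamma^I$ apply $\Gamma$ to the qudits indexed by $I$ and the identity elsewhere. For $\emptyset\ne I\subsetneq J$, a code $Q$ is $(I,J)$-locally recoverable if there is a trace-preserving quantum operation $\mathcal R$ acting only on the qudits indexed by $J$ (identity on the others) with $\mathcal R\circ\Gamma^I(|\varphi\rangle\langle\varphi|)=|\varphi\rangle\langle\varphi|$ for all $|\varphi\rangle\in Q$. *)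

theory Defs
  imports Complex_Main "HOL-Computational_Algebra.Primes"
begin

text \<open>A vector of F_p^K (K a finite set of coordinates) is a function nat => nat with
  values in {0..p-1} on K and 0 outside K.  A vector of F_p^{2|K|} is a pair (a,b).\<close>

definition fvec :: "nat \<Rightarrow> nat set \<Rightarrow> (nat \<Rightarrow> nat) set" where
  "fvec p K = {x. (\<forall>j\<in>K. x j < p) \<and> (\<forall>j. j \<notin> K \<longrightarrow> x j = 0)}"

type_synonym svec = "(nat \<Rightarrow> nat) \<times> (nat \<Rightarrow> nat)"

definition svecs :: "nat \<Rightarrow> nat set \<Rightarrow> svec set" where
  "svecs p K = fvec p K \<times> fvec p K"

definition sadd :: "nat \<Rightarrow> svec \<Rightarrow> svec \<Rightarrow> svec" where
  "sadd p u v = ((\<lambda>j. (fst u j + fst v j) mod p), (\<lambda>j. (snd u j + snd v j) mod p))"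

definition ssmul :: "nat \<Rightarrow> nat \<Rightarrow> svec \<Rightarrow> svec" where
  "ssmul p c u = ((\<lambda>j. (c * fst u j) mod p), (\<lambda>j. (c * snd u j) mod p))"

definition is_code :: "nat \<Rightarrow> nat \<Rightarrow> svec set \<Rightarrow> bool" where
  "is_code p n C \<longleftrightarrow> C \<subseteq> svecs p {1..n} \<and> ((\<lambda>_. 0), (\<lambda>_. 0)) \<in> C \<and>
     (\<forall>u\<in>C. \<forall>v\<in>C. sadd p u v \<in> C) \<and> (\<forall>c<p. \<forall>u\<in>C. ssmul p c u \<in> C)"

definition symp :: "nat \<Rightarrow> nat \<Rightarrow> svec \<Rightarrow> svec \<Rightarrow> int" where
  "symp p n u v = (\<Sum>j\<in>{1..n}. int (fst u j) * int (snd v j) - int (snd u j) * int (fst v j)) mod int p"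

definition sdual :: "nat \<Rightarrow> nat \<Rightarrow> svec set \<Rightarrow> svec set" where
  "sdual p n C = {y \<in> svecs p {1..n}. \<forall>c\<in>C. symp p n y c = 0}"

definition symp_self_orth :: "nat \<Rightarrow> nat \<Rightarrow> svec set \<Rightarrow> bool" where
  "symp_self_orth p n C \<longleftrightarrow> is_code p n C \<and> C \<subseteq> sdual p n C"

text \<open>pi_R: keep coordinate pairs indexed by R (others set to 0, i.e. dropped).\<close>
definition proj :: "nat set \<Rightarrow> svec \<Rightarrow> svec" where
  "proj R y = ((\<lambda>j. if j \<in> R then fst y j else 0), (\<lambda>j. if j \<in> R then snd y j else 0))"

definition puncture :: "nat set \<Rightarrow> svec set \<Rightarrow> svec set" where
  "puncture R D = proj R ` D"

definition shorten :: "nat set \<Rightarrow> svec set \<Rightarrow> svec set" where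
  "shorten R D = {proj R y | y. y \<in> D \<and> (\<forall>j. j \<notin> R \<longrightarrow> fst y j = 0 \<and> snd y j = 0)}"

text \<open>Computational basis of (C^p)^{\<otimes>K}: the vectors fvec p K.  States are functions
  on basis labels (values outside the basis are irrelevant); operators are matrices
  indexed by basis labels (entries outside the basis are 0 for the operators below).\<close>

type_synonym cmat = "(nat \<Rightarrow> nat) \<Rightarrow> (nat \<Rightarrow> nat) \<Rightarrow> complex"

definition xi :: "nat \<Rightarrow> complex" where
  "xi p = cis (2 * pi / real p)"

definition mmul :: "(nat \<Rightarrow> nat) set \<Rightarrow> cmat \<Rightarrow> cmat \<Rightarrow> cmat" where
  "mmul B X Y = (\<lambda>x y. \<Sum>z\<in>B. X x z * Y z y)"

definition madj :: "cmat \<Rightarrow> cmat" where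
  "madj X = (\<lambda>x y. cnj (X y x))"

definition ident :: "(nat \<Rightarrow> nat) set \<Rightarrow> cmat" where
  "ident B = (\<lambda>x y. if x \<in> B \<and> y \<in> B \<and> x = y then 1 else 0)"

definition mvec :: "(nat \<Rightarrow> nat) set \<Rightarrow> cmat \<Rightarrow> ((nat \<Rightarrow> nat) \<Rightarrow> complex) \<Rightarrow> ((nat \<Rightarrow> nat) \<Rightarrow> complex)" where
  "mvec B X v = (\<lambda>x. \<Sum>y\<in>B. X x y * v y)"

definition mat_eq :: "(nat \<Rightarrow> nat) set \<Rightarrow> cmat \<Rightarrow> cmat \<Rightarrow> bool" where
  "mat_eq B X Y \<longleftrightarrow> (\<forall>x\<in>B. \<forall>y\<in>B. X x y = Y x y)"

text \<open>E_(a,b) = tensor_j X(a_j) Z(b_j) on n qudits:  E |x> = xi^(b.x) |x + a>.\<close>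
definition pauli :: "nat \<Rightarrow> nat \<Rightarrow> svec \<Rightarrow> cmat" where
  "pauli p n y = (\<lambda>z x. if z \<in> fvec p {1..n} \<and> x \<in> fvec p {1..n} \<and>
        z = (\<lambda>j. (x j + fst y j) mod p)
      then xi p ^ (\<Sum>j\<in>{1..n}. snd y j * x j) else 0)"

text \<open>The stabilizer group S: generated by the scalars xi^l I and E_y, y in C
  (closure under products; S is finite, so this is the generated group).\<close>
inductive_set stab_group :: "nat \<Rightarrow> nat \<Rightarrow> svec set \<Rightarrow> cmat set"
  for p :: nat and n :: nat and C :: "svec set" where
  scalar: "(\<lambda>x y. xi p ^ l * ident (fvec p {1..n}) x y) \<in> stab_group p n C"
| gen: "y \<in> C \<Longrightarrow> pauli p n y \<in> stab_group p n C"
| mult: "A \<in> stab_group p n C \<Longrightarrow> B \<in> stab_group p n C \<Longrightarrow>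
         mmul (fvec p {1..n}) A B \<in> stab_group p n C"

definition is_character :: "nat \<Rightarrow> nat \<Rightarrow> svec set \<Rightarrow> (cmat \<Rightarrow> complex) \<Rightarrow> bool" where
  "is_character p n C lam \<longleftrightarrow>
     (\<forall>A\<in>stab_group p n C. \<forall>B\<in>stab_group p n C.
        lam (mmul (fvec p {1..n}) A B) = lam A * lam B) \<and>
     (\<forall>A\<in>stab_group p n C. lam A \<noteq> 0) \<and>
     lam (\<lambda>x y. xi p * ident (fvec p {1..n}) x y) = xi p"

definition stab_code :: "nat \<Rightarrow> nat \<Rightarrow> svec set \<Rightarrow> (cmat \<Rightarrow> complex) \<Rightarrow> ((nat \<Rightarrow> nat) \<Rightarrow> complex) set" where
  "stab_code p n C lam = {v. \<forall>E\<in>stab_group p n C. \<forall>x\<in>fvec p {1..n}.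
       mvec (fvec p {1..n}) E v x = lam E * v x}"

definition ketbra :: "((nat \<Rightarrow> nat) \<Rightarrow> complex) \<Rightarrow> cmat" where
  "ketbra v = (\<lambda>x y. v x * cnj (v y))"

text \<open>Gamma^I = (tensor over j in I of Gamma) tensor id, written out:
  p^(-2|I|) * sum over (a,b) supported on I of E_(a,b) rho E_(a,b)^dagger.\<close>
definition gammaI :: "nat \<Rightarrow> nat \<Rightarrow> nat set \<Rightarrow> cmat \<Rightarrow> cmat" where
  "gammaI p n I rho = (\<lambda>x y. (1 / of_nat p ^ (2 * card I)) *
     (\<Sum>e\<in>svecs p I. mmul (fvec p {1..n})
        (mmul (fvec p {1..n}) (pauli p n e) rho) (madj (pauli p n e)) x y))"

definition restr :: "nat set \<Rightarrow> (nat \<Rightarrow> nat) \<Rightarrow> (nat \<Rightarrow> nat)" where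
  "restr J x = (\<lambda>j. if j \<in> J then x j else 0)"

text \<open>A \<otimes> I_{complement of J}, for A an operator on the qudits indexed by J.\<close>
definition local_op :: "nat \<Rightarrow> nat \<Rightarrow> nat set \<Rightarrow> cmat \<Rightarrow> cmat" where
  "local_op p n J A = (\<lambda>x y. if x \<in> fvec p {1..n} \<and> y \<in> fvec p {1..n} \<and>
       (\<forall>j. j \<notin> J \<longrightarrow> x j = y j) then A (restr J x) (restr J y) else 0)"

text \<open>Trace-preserving quantum operation on the qudits J (identity elsewhere), in
  Kraus (operator-sum) form: R(rho) = sum_k (A_k \<otimes> I) rho (A_k \<otimes> I)^dagger with
  sum_k A_k^dagger A_k = I.\<close>
definition kraus_TP :: "nat \<Rightarrow> nat set \<Rightarrow> cmat list \<Rightarrow> bool" where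
  "kraus_TP p J As \<longleftrightarrow> mat_eq (fvec p J)
     (\<lambda>x y. \<Sum>k<length As. mmul (fvec p J) (madj (As ! k)) (As ! k) x y) (ident (fvec p J))"

definition apply_local_kraus :: "nat \<Rightarrow> nat \<Rightarrow> nat set \<Rightarrow> cmat list \<Rightarrow> cmat \<Rightarrow> cmat" where
  "apply_local_kraus p n J As rho = (\<lambda>x y. \<Sum>k<length As.
     mmul (fvec p {1..n}) (mmul (fvec p {1..n}) (local_op p n J (As ! k)) rho)
       (madj (local_op p n J (As ! k))) x y)"

definition locally_recoverable ::
  "nat \<Rightarrow> nat \<Rightarrow> nat set \<Rightarrow> nat set \<Rightarrow> ((nat \<Rightarrow> nat) \<Rightarrow> complex) set \<Rightarrow> bool" where
  "locally_recoverable p n I J Q \<longleftrightarrow> I \<noteq> {} \<and> I \<subset> J \<and>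
     (\<exists>As. kraus_TP p J As \<and>
        (\<forall>v\<in>Q. mat_eq (fvec p {1..n})
           (apply_local_kraus p n J As (gammaI p n I (ketbra v))) (ketbra v)))"

end

theory Submission
  imports Defs "HOL-Library.FuncSet" "HOL-Number_Theory.Cong"
begin

(* Let S be the subcode of C supported on J.  Its Pauli operators E_c act on the qudits of J
   only, and a Pauli error E_e with e supported on I multiplies the eigenvalue of E_c on Q(C)
   by the character c |-> xi^<e,c> of S, its syndrome.  The recovery channel measures this
   syndrome on J, with Kraus operators built from the projectors onto the joint eigenspaces of
   the E_c (c in S), and then applies a Pauli correction r supported on I having the measured
   syndrome.  Shortening and puncturing are dual: a vector on J orthogonal to S extends to a
   vector of the dual code, i.e. lies in pi_J(C^perp).  With the hypothesis this puts every
   vector on I orthogonal to S into C, in particular e - r, and E_(e-r) acts on Q(C) as a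
   scalar of modulus one.  So the channel returns every state of Q(C) up to a phase. *)


lemma sum_eq_single:
  assumes "finite B" "z \<in> B" "\<And>w. w \<in> B \<Longrightarrow> w \<noteq> z \<Longrightarrow> f w = 0"
  shows "sum f B = f z"
  using assms sum.mono_neutral_right[of B "{z}" f] by auto

section \<open>Roots of unity\<close>

definition unit_root :: "nat \<Rightarrow> int \<Rightarrow> complex" where
  "unit_root p k = cis (2 * pi * of_int k / real p)"

lemma unit_root_add: "unit_root p (a + b) = unit_root p a * unit_root p b"
  unfolding unit_root_def by (simp add: cis_mult add_divide_distrib distrib_left)

lemma unit_root_0 [simp]: "unit_root p 0 = 1"
  unfolding unit_root_def by simp

lemma unit_root_eq_1_iff:
  assumes "p > 0"
  shows "unit_root p k = 1 \<longleftrightarrow> int p dvd k"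
proof
  assume "int p dvd k"
  then obtain m where "k = int p * m" by blast
  then have "2 * pi * of_int k / real p = 2 * pi * of_int m"
    using assms by (simp add: field_simps)
  then show "unit_root p k = 1"
    unfolding unit_root_def by (simp add: cis_multiple_2pi)
next
  assume "unit_root p k = 1"
  then have "cos (2 * pi * of_int k / real p) = 1"
    unfolding unit_root_def by (metis cis.sel(1) one_complex.sel(1))
  then obtain m :: int where "2 * pi * of_int k / real p = of_int m * 2 * pi"
    using cos_one_2pi_int by blast
  then have "real_of_int k = real_of_int (m * int p)"
    using assms by (simp add: field_simps)
  then show "int p dvd k"
    by (metis dvd_triv_right of_int_eq_iff)
qed

lemma unit_root_cong:
  assumes "p > 0" and "[a = b] (mod int p)"
  shows "unit_root p a = unit_root p b"
proof -
  have "unit_root p (a - b) = 1"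
    using assms by (simp add: unit_root_eq_1_iff cong_iff_dvd_diff)
  then show ?thesis
    using unit_root_add[of p "a - b" b] by simp
qed

lemma cnj_unit_root: "cnj (unit_root p k) = unit_root p (- k)"
  unfolding unit_root_def by (simp add: cis_cnj)

lemma cnj_unit_root_mult [simp]: "cnj (unit_root p k) * unit_root p k = 1"
  by (simp add: cnj_unit_root flip: unit_root_add)

lemma xi_power: "xi p ^ m = unit_root p (int m)"
  unfolding xi_def unit_root_def by (simp add: DeMoivre algebra_simps)

section \<open>Vectors over the prime field\<close>

lemma bij_betw_restrict_fvec: "bij_betw (\<lambda>x. restrict x K) (fvec p K) (PiE K (\<lambda>_. {..<p}))"
  by (rule bij_betw_byWitness[where f' = "\<lambda>f j. if j \<in> K then f j else 0"])
     (auto simp: fvec_def PiE_def extensional_def fun_eq_iff)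

lemma card_fvec: "finite K \<Longrightarrow> card (fvec p K) = p ^ card K"
  using bij_betw_same_card[OF bij_betw_restrict_fvec] by (simp add: card_PiE)

lemma finite_fvec: "finite K \<Longrightarrow> finite (fvec p K)"
  using bij_betw_finite[OF bij_betw_restrict_fvec] by (simp add: finite_PiE)

lemma card_svecs: "finite K \<Longrightarrow> card (svecs p K) = p ^ (2 * card K)"
  unfolding svecs_def by (simp add: card_cartesian_product card_fvec power_mult power2_eq_square power_mult_distrib)

lemma card_svecs_pos: "finite K \<Longrightarrow> p > 0 \<Longrightarrow> card (svecs p K) > 0"
  by (simp add: card_svecs)

lemma finite_svecs: "finite K \<Longrightarrow> finite (svecs p K)"
  unfolding svecs_def by (simp add: finite_fvec)

lemma svecs_mono: "K \<subseteq> K' \<Longrightarrow> p > 0 \<Longrightarrow> svecs p K \<subseteq> svecs p K'"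
  unfolding svecs_def fvec_def by auto

lemma svecs_less:
  assumes "y \<in> svecs p K" and "p > 0"
  shows "fst y j < p" and "snd y j < p"
  using assms unfolding svecs_def fvec_def by (cases "j \<in> K"; force)+

definition szero :: svec where
  "szero = ((\<lambda>_. 0), (\<lambda>_. 0))"

lemma szero_svecs: "p > 0 \<Longrightarrow> szero \<in> svecs p K"
  unfolding szero_def svecs_def fvec_def by auto

lemma sadd_svecs: "u \<in> svecs p K \<Longrightarrow> v \<in> svecs p K \<Longrightarrow> p > 0 \<Longrightarrow> sadd p u v \<in> svecs p K"
  unfolding svecs_def fvec_def sadd_def by auto

lemma sadd_commute: "sadd p u v = sadd p v u"
  unfolding sadd_def by (simp add: add.commute)

lemma inj_on_sadd:
  assumes "p > 0"
  shows "inj_on (sadd p g) (svecs p K)"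
proof (rule inj_onI)
  fix u v
  assume u: "u \<in> svecs p K" and v: "v \<in> svecs p K" and "sadd p g u = sadd p g v"
  then have "(fst g j + fst u j) mod p = (fst g j + fst v j) mod p"
    and "(snd g j + snd u j) mod p = (snd g j + snd v j) mod p" for j
    unfolding sadd_def by (simp_all add: fun_eq_iff)
  then have "fst u j = fst v j" and "snd u j = snd v j" for j
    using svecs_less[OF u assms] svecs_less[OF v assms]
    by (metis cong_add_lcancel_nat cong_def mod_less)+
  then show "u = v"
    by (simp add: prod_eq_iff fun_eq_iff)
qed

definition sneg :: "nat \<Rightarrow> svec \<Rightarrow> svec" where
  "sneg p y = ((\<lambda>j. (p - fst y j) mod p), (\<lambda>j. (p - snd y j) mod p))"

lemma sneg_svecs: "y \<in> svecs p K \<Longrightarrow> sneg p y \<in> svecs p K"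
  unfolding svecs_def fvec_def sneg_def by auto

definition supported_on :: "nat set \<Rightarrow> svec \<Rightarrow> bool" where
  "supported_on K y \<longleftrightarrow> (\<forall>j. j \<notin> K \<longrightarrow> fst y j = 0 \<and> snd y j = 0)"

lemma svecs_supported_on: "y \<in> svecs p K \<Longrightarrow> supported_on K y"
  unfolding svecs_def fvec_def supported_on_def by auto

lemma svecs_supported_on_iff:
  assumes "K \<subseteq> K'" and "y \<in> svecs p K'"
  shows "y \<in> svecs p K \<longleftrightarrow> supported_on K y"
  using assms unfolding svecs_def fvec_def supported_on_def by (auto simp: subset_iff)

lemma proj_supported_on: "supported_on K y \<Longrightarrow> proj K y = y"
  unfolding proj_def supported_on_def by (simp add: prod_eq_iff fun_eq_iff)

lemma sum_unit_root_additive: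
  assumes p: "p > 0" and fin: "finite G" and sub: "G \<subseteq> svecs p K"
    and closed: "\<And>u v. u \<in> G \<Longrightarrow> v \<in> G \<Longrightarrow> sadd p u v \<in> G"
    and additive: "\<And>u v. u \<in> G \<Longrightarrow> v \<in> G \<Longrightarrow> [f (sadd p u v) = f u + f v] (mod int p)"
  shows "(\<Sum>g\<in>G. unit_root p (f g)) = (if \<forall>g\<in>G. int p dvd f g then of_nat (card G) else 0)"
proof (cases "\<forall>g\<in>G. int p dvd f g")
  case True
  then have "\<forall>g\<in>G. unit_root p (f g) = 1"
    using unit_root_eq_1_iff[OF p] by blast
  then show ?thesis
    using True by simp
next
  case False
  then obtain g0 where g0: "g0 \<in> G" "\<not> int p dvd f g0" by blast
  have inj: "inj_on (sadd p g0) G"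
    using inj_on_subset[OF inj_on_sadd[OF p] sub] .
  have "sadd p g0 ` G \<subseteq> G"
    using closed g0 by blast
  then have "sadd p g0 ` G = G"
    using card_image[OF inj] by (intro card_subset_eq fin)
  then have "(\<Sum>g\<in>G. unit_root p (f g)) = (\<Sum>g\<in>G. unit_root p (f (sadd p g0 g)))"
    using sum.reindex[OF inj, of "\<lambda>g. unit_root p (f g)"] by simp
  also have "\<dots> = (\<Sum>g\<in>G. unit_root p (f g0 + f g))"
    using additive g0 unit_root_cong[OF p] by (intro sum.cong) auto
  also have "\<dots> = unit_root p (f g0) * (\<Sum>g\<in>G. unit_root p (f g))"
    by (simp add: sum_distrib_left unit_root_add)
  finally have "(1 - unit_root p (f g0)) * (\<Sum>g\<in>G. unit_root p (f g)) = 0"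
    by (simp add: algebra_simps)
  then show ?thesis
    using False g0 unit_root_eq_1_iff[OF p] by auto
qed

section \<open>The symplectic form over the integers\<close>

lemma dvd_diff_less_imp_eq: "a < p \<Longrightarrow> b < p \<Longrightarrow> int p dvd (int a - int b) \<Longrightarrow> a = b"
  by (metis cong_iff_dvd_diff cong_int_iff cong_less_imp_eq_nat zero_le)

definition sform :: "nat set \<Rightarrow> svec \<Rightarrow> svec \<Rightarrow> int" where
  "sform K u v = (\<Sum>j\<in>K. int (fst u j) * int (snd v j) - int (snd u j) * int (fst v j))"

lemma symp_eq_sform_mod: "symp p n u v = sform {1..n} u v mod int p"
  unfolding symp_def sform_def ..

lemma sform_szero_right [simp]: "sform K u szero = 0"
  unfolding sform_def szero_def by simp

lemma cong_int_add_mod: "[int ((a + b) mod p) = int a + int b] (mod int p)"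
  by (simp add: cong_def of_nat_mod mod_simps)

lemma cong_int_neg_mod: "b \<le> p \<Longrightarrow> [int ((p - b) mod p) = - int b] (mod int p)"
  by (simp add: cong_def of_nat_mod of_nat_diff mod_simps)

lemma sform_sadd_left: "[sform K (sadd p u v) w = sform K u w + sform K v w] (mod int p)"
proof -
  have "[sform K (sadd p u v) w = (\<Sum>j\<in>K. (int (fst u j) + int (fst v j)) * int (snd w j)
      - (int (snd u j) + int (snd v j)) * int (fst w j))] (mod int p)"
    unfolding sform_def sadd_def
    by (intro cong_sum cong_diff cong_mult cong_refl) (simp_all add: cong_int_add_mod)
  then show ?thesis
    by (simp add: sform_def algebra_simps flip: sum.distrib sum_subtractf)
qed

lemma sform_sadd_right: "[sform K w (sadd p u v) = sform K w u + sform K w v] (mod int p)"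
proof -
  have "[sform K w (sadd p u v) = (\<Sum>j\<in>K. int (fst w j) * (int (snd u j) + int (snd v j))
      - int (snd w j) * (int (fst u j) + int (fst v j)))] (mod int p)"
    unfolding sform_def sadd_def
    by (intro cong_sum cong_diff cong_mult cong_refl) (simp_all add: cong_int_add_mod)
  then show ?thesis
    by (simp add: sform_def algebra_simps flip: sum.distrib sum_subtractf)
qed

lemma sform_sneg_left:
  assumes "y \<in> svecs p K'"
  shows "[sform K (sneg p y) u = - sform K y u] (mod int p)"
proof -
  have "fst y j \<le> p" "snd y j \<le> p" for j
    using assms unfolding svecs_def fvec_def by (cases "j \<in> K'"; force)+
  then have "[sform K (sneg p y) u = (\<Sum>j\<in>K. (- int (fst y j)) * int (snd u j)
      - (- int (snd y j)) * int (fst u j))] (mod int p)"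
    unfolding sform_def sneg_def
    by (intro cong_sum cong_diff cong_mult cong_refl) (simp_all add: cong_int_neg_mod)
  then show ?thesis
    by (simp add: sform_def algebra_simps flip: sum_negf sum_subtractf)
qed

lemma sform_unit_vectors:
  assumes "finite N" and "j \<in> N"
  shows "sform N ((\<lambda>i. if i = j then 1 else 0), (\<lambda>_. 0)) c = int (snd c j)"
    and "sform N ((\<lambda>_. 0), (\<lambda>i. if i = j then 1 else 0)) c = - int (fst c j)"
  unfolding sform_def by (subst sum_eq_single[OF assms]; simp)+

lemma sform_separates:
  assumes "p > 1" and "finite N" and "K \<subseteq> N" and "c \<in> svecs p N" and "c' \<in> svecs p N"
    and dvd: "\<forall>h\<in>svecs p K. int p dvd (sform N h c - sform N h c')" and "j \<in> K"
  shows "fst c j = fst c' j \<and> snd c j = snd c' j"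
proof -
  let ?a = "((\<lambda>i. if i = j then 1 else 0), (\<lambda>_. 0)) :: svec"
  let ?b = "((\<lambda>_. 0), (\<lambda>i. if i = j then 1 else 0)) :: svec"
  have "?a \<in> svecs p K" and "?b \<in> svecs p K"
    using assms unfolding svecs_def fvec_def by auto
  then have "int p dvd (sform N ?a c - sform N ?a c')" and "int p dvd (sform N ?b c - sform N ?b c')"
    using dvd by blast+
  moreover have "j \<in> N"
    using assms by blast
  ultimately have "int p dvd (int (snd c j) - int (snd c' j))"
    and "int p dvd (int (fst c j) - int (fst c' j))"
    using sform_unit_vectors[OF \<open>finite N\<close>] by (simp_all add: dvd_diff_commute)
  moreover have "p > 0"
    using assms by simp
  ultimately show ?thesis
    using svecs_less assms(4,5) dvd_diff_less_imp_eq by metis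
qed

lemma sform_eq_if_agree:
  assumes "supported_on K h" and "\<forall>j\<in>K. fst c j = fst c' j \<and> snd c j = snd c' j"
  shows "sform N h c = sform N h c'"
  unfolding sform_def
proof (intro sum.cong refl)
  fix j
  show "int (fst h j) * int (snd c j) - int (snd h j) * int (fst c j) =
      int (fst h j) * int (snd c' j) - int (snd h j) * int (fst c' j)"
    using assms unfolding supported_on_def by (cases "j \<in> K") auto
qed

lemma sum_unit_root_sform_svecs:
  assumes p: "p > 1" and "finite N" and K: "K \<subseteq> N" and "c \<in> svecs p N" and "c' \<in> svecs p N"
  shows "(\<Sum>h\<in>svecs p K. unit_root p (sform N h c - sform N h c')) =
    (if \<forall>j\<in>K. fst c j = fst c' j \<and> snd c j = snd c' j then of_nat (card (svecs p K)) else 0)"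
proof -
  have "finite K"
    using K \<open>finite N\<close> finite_subset by blast
  have "(\<Sum>h\<in>svecs p K. unit_root p (sform N h c - sform N h c')) =
      (if \<forall>h\<in>svecs p K. int p dvd (sform N h c - sform N h c')
       then of_nat (card (svecs p K)) else 0)"
  proof (rule sum_unit_root_additive[OF _ finite_svecs[OF \<open>finite K\<close>] order_refl])
    fix u v
    show "[sform N (sadd p u v) c - sform N (sadd p u v) c' =
        sform N u c - sform N u c' + (sform N v c - sform N v c')] (mod int p)"
      using cong_diff[OF sform_sadd_left sform_sadd_left] by (simp add: algebra_simps)
  qed (use p sadd_svecs in auto)
  moreover have "(\<forall>h\<in>svecs p K. int p dvd (sform N h c - sform N h c')) \<longleftrightarrow>
      (\<forall>j\<in>K. fst c j = fst c' j \<and> snd c j = snd c' j)"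
  proof
    assume "\<forall>h\<in>svecs p K. int p dvd (sform N h c - sform N h c')"
    then show "\<forall>j\<in>K. fst c j = fst c' j \<and> snd c j = snd c' j"
      using sform_separates[OF assms] by blast
  next
    assume "\<forall>j\<in>K. fst c j = fst c' j \<and> snd c j = snd c' j"
    then have "sform N h c = sform N h c'" if "h \<in> svecs p K" for h
      using sform_eq_if_agree[OF svecs_supported_on[OF that]] by blast
    then show "\<forall>h\<in>svecs p K. int p dvd (sform N h c - sform N h c')"
      by simp
  qed
  ultimately show ?thesis
    by simp
qed

section \<open>Pauli operators\<close>

definition shift :: "nat \<Rightarrow> svec \<Rightarrow> (nat \<Rightarrow> nat) \<Rightarrow> (nat \<Rightarrow> nat)" where
  "shift p y x = (\<lambda>j. (x j + fst y j) mod p)"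

definition pauli_on :: "nat \<Rightarrow> nat set \<Rightarrow> svec \<Rightarrow> cmat" where
  "pauli_on p K y = (\<lambda>z x. if z \<in> fvec p K \<and> x \<in> fvec p K \<and> z = shift p y x
      then unit_root p (int (\<Sum>j\<in>K. snd y j * x j)) else 0)"

lemma pauli_eq_pauli_on: "pauli p n y = pauli_on p {1..n} y"
  unfolding pauli_def pauli_on_def xi_power shift_def ..

lemma shift_fvec: "x \<in> fvec p K \<Longrightarrow> y \<in> svecs p K \<Longrightarrow> p > 0 \<Longrightarrow> shift p y x \<in> fvec p K"
  unfolding shift_def svecs_def fvec_def by auto

lemma inj_on_shift: "inj_on (shift p y) (fvec p K)"
proof (rule inj_onI)
  fix x x'
  assume x: "x \<in> fvec p K" and x': "x' \<in> fvec p K" and "shift p y x = shift p y x'"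
  then have "(x j + fst y j) mod p = (x' j + fst y j) mod p" for j
    unfolding shift_def by meson
  then have "x j mod p = x' j mod p" for j
    by (metis cong_add_rcancel_nat cong_def)
  moreover have "x j < p \<and> x' j < p \<or> x j = x' j" for j
    using x x' unfolding fvec_def by (cases "j \<in> K") auto
  ultimately have "x j = x' j" for j
    by (metis mod_less)
  then show "x = x'" ..
qed

lemma pauli_on_off_shift: "z \<noteq> shift p y x \<Longrightarrow> pauli_on p K y z x = 0"
  unfolding pauli_on_def by auto

lemma pauli_on_unitary:
  assumes p: "p > 0" and fin: "finite K" and y: "y \<in> svecs p K"
    and x: "x \<in> fvec p K" and x': "x' \<in> fvec p K"
  shows "(\<Sum>z\<in>fvec p K. cnj (pauli_on p K y z x) * pauli_on p K y z x') = (if x = x' then 1 else 0)"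
proof -
  have z: "shift p y x \<in> fvec p K"
    using shift_fvec[OF x y p] .
  have "(\<Sum>z\<in>fvec p K. cnj (pauli_on p K y z x) * pauli_on p K y z x') =
      cnj (pauli_on p K y (shift p y x) x) * pauli_on p K y (shift p y x) x'"
    by (rule sum_eq_single[OF finite_fvec[OF fin] z]) (simp add: pauli_on_off_shift)
  moreover have "x \<noteq> x' \<Longrightarrow> shift p y x \<noteq> shift p y x'"
    using inj_on_shift x x' by (metis inj_on_contraD)
  ultimately show ?thesis
    using x z by (auto simp: pauli_on_def pauli_on_off_shift)
qed

lemma cong_pauli_phase:
  "[(b::nat) * ((x + a') mod p) + b' * x = b * a' + ((b + b') mod p) * x] (mod p)"
proof -
  have "[b * ((x + a') mod p) + b' * x = b * (x + a') + b' * x] (mod p)"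
    and "[b * a' + ((b + b') mod p) * x = b * a' + (b + b') * x] (mod p)"
    by (intro cong_add cong_mult cong_refl; simp add: cong_def)+
  moreover have "b * (x + a') + b' * x = b * a' + (b + b') * x"
    by (simp add: algebra_simps)
  ultimately show ?thesis
    by (metis cong_sym cong_trans)
qed

lemma pauli_on_mult:
  assumes p: "p > 0" and fin: "finite K" and y: "y \<in> svecs p K" and y': "y' \<in> svecs p K"
  shows "mmul (fvec p K) (pauli_on p K y) (pauli_on p K y') z x =
     unit_root p (int (\<Sum>j\<in>K. snd y j * fst y' j)) * pauli_on p K (sadd p y y') z x"
proof (cases "x \<in> fvec p K")
  case False
  then show ?thesis
    unfolding mmul_def pauli_on_def by simp
next
  case x: True
  let ?u = "shift p y' x"
  have u: "?u \<in> fvec p K"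
    using shift_fvec[OF x y' p] .
  have "mmul (fvec p K) (pauli_on p K y) (pauli_on p K y') z x =
      pauli_on p K y z ?u * pauli_on p K y' ?u x"
    unfolding mmul_def by (rule sum_eq_single[OF finite_fvec[OF fin] u]) (simp add: pauli_on_off_shift)
  moreover have "shift p y ?u = shift p (sadd p y y') x"
    unfolding shift_def sadd_def by (simp add: mod_simps add_ac)
  moreover have "[int (\<Sum>j\<in>K. snd y j * ?u j) + int (\<Sum>j\<in>K. snd y' j * x j) =
      int (\<Sum>j\<in>K. snd y j * fst y' j) + int (\<Sum>j\<in>K. snd (sadd p y y') j * x j)] (mod int p)"
  proof -
    have "[(\<Sum>j\<in>K. snd y j * ?u j + snd y' j * x j) =
        (\<Sum>j\<in>K. snd y j * fst y' j + snd (sadd p y y') j * x j)] (mod p)"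
      unfolding shift_def sadd_def by (intro cong_sum) (simp add: cong_pauli_phase)
    then show ?thesis
      by (simp add: sum.distrib flip: cong_int_iff del: of_nat_sum)
  qed
  then have "unit_root p (int (\<Sum>j\<in>K. snd y j * ?u j)) * unit_root p (int (\<Sum>j\<in>K. snd y' j * x j)) =
      unit_root p (int (\<Sum>j\<in>K. snd y j * fst y' j)) * unit_root p (int (\<Sum>j\<in>K. snd (sadd p y y') j * x j))"
    by (simp add: unit_root_cong[OF p] flip: unit_root_add)
  moreover have "shift p (sadd p y y') x \<in> fvec p K"
    using shift_fvec[OF x sadd_svecs[OF y y' p] p] .
  ultimately show ?thesis
    unfolding pauli_on_def using x u by simp
qed

section \<open>Matrix calculus\<close>

lemma mvec_mmul: "mvec B (mmul B X Y) w = mvec B X (mvec B Y w)"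
proof
  fix x
  have "(\<Sum>y\<in>B. (\<Sum>z\<in>B. X x z * Y z y) * w y) = (\<Sum>y\<in>B. \<Sum>z\<in>B. X x z * (Y z y * w y))"
    by (simp add: sum_distrib_right mult.assoc)
  also have "\<dots> = (\<Sum>z\<in>B. X x z * (\<Sum>y\<in>B. Y z y * w y))"
    by (subst sum.swap) (simp add: sum_distrib_left)
  finally show "mvec B (mmul B X Y) w x = mvec B X (mvec B Y w) x"
    unfolding mvec_def mmul_def .
qed

lemma mvec_scale_matrix: "mvec B (\<lambda>z x. k * M z x) w z = k * mvec B M w z"
  unfolding mvec_def by (simp add: sum_distrib_left mult.assoc)

lemma mvec_scale_vector: "mvec B M (\<lambda>x. k * w x) z = k * mvec B M w z"
  unfolding mvec_def by (simp add: sum_distrib_left mult_ac)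

lemma mvec_cong: "(\<And>x. x \<in> B \<Longrightarrow> w x = w' x) \<Longrightarrow> mvec B X w = mvec B X w'"
  unfolding mvec_def by simp

lemma mvec_sum_matrix:
  "mvec B (\<lambda>z x. \<Sum>c\<in>S. f c * M c z x) w z = (\<Sum>c\<in>S. f c * mvec B (M c) w z)"
proof -
  have "mvec B (\<lambda>z x. \<Sum>c\<in>S. f c * M c z x) w z = (\<Sum>x\<in>B. \<Sum>c\<in>S. f c * (M c z x * w x))"
    unfolding mvec_def by (simp add: sum_distrib_right mult.assoc)
  also have "\<dots> = (\<Sum>c\<in>S. f c * mvec B (M c) w z)"
    unfolding mvec_def by (subst sum.swap) (simp add: sum_distrib_left)
  finally show ?thesis .
qed

lemma mmul_sum_right:
  "mmul B X (\<lambda>a b. \<Sum>c\<in>S. f c * M c a b) x y = (\<Sum>c\<in>S. f c * mmul B X (M c) x y)"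
proof -
  have "mmul B X (\<lambda>a b. \<Sum>c\<in>S. f c * M c a b) x y = (\<Sum>z\<in>B. \<Sum>c\<in>S. f c * (X x z * M c z y))"
    unfolding mmul_def by (simp add: sum_distrib_left mult_ac)
  also have "\<dots> = (\<Sum>c\<in>S. f c * mmul B X (M c) x y)"
    unfolding mmul_def by (subst sum.swap) (simp add: sum_distrib_left)
  finally show ?thesis .
qed

lemma ketbra_sandwich: "mmul B (mmul B M (ketbra w)) (madj M) x y = ketbra (mvec B M w) x y"
proof -
  have "mmul B (mmul B M (ketbra w)) (madj M) x y =
      (\<Sum>z\<in>B. (\<Sum>u\<in>B. M x u * w u) * (cnj (w z) * cnj (M y z)))"
    unfolding mmul_def ketbra_def madj_def
    by (intro sum.cong refl) (simp add: sum_distrib_right mult.assoc)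
  also have "\<dots> = ketbra (mvec B M w) x y"
    unfolding ketbra_def mvec_def by (simp add: cnj_sum sum_distrib_left mult_ac)
  finally show ?thesis .
qed

lemma sandwich_sum:
  "mmul B (mmul B L (\<lambda>a b. k * (\<Sum>e\<in>E. M e a b))) R x y = k * (\<Sum>e\<in>E. mmul B (mmul B L (M e)) R x y)"
proof -
  have "mmul B (mmul B L (\<lambda>a b. k * (\<Sum>e\<in>E. M e a b))) R x y =
      (\<Sum>z\<in>B. \<Sum>u\<in>B. \<Sum>e\<in>E. k * (L x u * M e u z * R z y))"
    unfolding mmul_def by (simp add: sum_distrib_left sum_distrib_right mult_ac)
  also have "\<dots> = (\<Sum>e\<in>E. \<Sum>z\<in>B. \<Sum>u\<in>B. k * (L x u * M e u z * R z y))"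
    by (simp only: sum.swap[of _ B E])
  also have "\<dots> = k * (\<Sum>e\<in>E. mmul B (mmul B L (M e)) R x y)"
    unfolding mmul_def by (simp add: sum_distrib_left sum_distrib_right mult_ac)
  finally show ?thesis .
qed

lemma sum_cnj_mmul_unitary:
  assumes fin: "finite B"
    and U: "\<And>w w'. w \<in> B \<Longrightarrow> w' \<in> B \<Longrightarrow> (\<Sum>z\<in>B. cnj (U z w) * U z w') = (if w = w' then 1 else 0)"
  shows "(\<Sum>z\<in>B. cnj (mmul B U P z x) * mmul B U P z y) = (\<Sum>w\<in>B. cnj (P w x) * P w y)"
proof -
  have "(\<Sum>z\<in>B. cnj (mmul B U P z x) * mmul B U P z y) =
      (\<Sum>z\<in>B. \<Sum>w\<in>B. \<Sum>w'\<in>B. (cnj (P w x) * P w' y) * (cnj (U z w) * U z w'))"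
    unfolding mmul_def cnj_sum complex_cnj_mult sum_product by (simp only: mult_ac)
  also have "\<dots> = (\<Sum>w\<in>B. \<Sum>w'\<in>B. \<Sum>z\<in>B. (cnj (P w x) * P w' y) * (cnj (U z w) * U z w'))"
    by (subst sum.swap) (rule sum.cong[OF refl], rule sum.swap)
  also have "\<dots> = (\<Sum>w\<in>B. \<Sum>w'\<in>B. (cnj (P w x) * P w' y) * (if w = w' then 1 else 0))"
    by (simp only: U sum_distrib_left[symmetric] cong: sum.cong)
  also have "\<dots> = (\<Sum>w\<in>B. cnj (P w x) * P w y)"
  proof (rule sum.cong[OF refl])
    fix w
    assume "w \<in> B"
    then show "(\<Sum>w'\<in>B. (cnj (P w x) * P w' y) * (if w = w' then 1 else 0)) = cnj (P w x) * P w y"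
      by (subst sum_eq_single[OF fin]) auto
  qed
  finally show ?thesis .
qed

lemma sum_nth_distinct: "distinct vs \<Longrightarrow> (\<Sum>k<length vs. f (vs ! k)) = (\<Sum>v\<in>set vs. f v)"
  by (simp add: sum_list_sum_nth atLeast0LessThan flip: sum_list_distinct_conv_sum_set)

lemma sum_cnj_mult_self_nonzero:
  assumes "finite B" and "x \<in> B" and "w x \<noteq> 0"
  shows "(\<Sum>z\<in>B. cnj (w z) * w z) \<noteq> 0"
proof -
  have "(\<Sum>z\<in>B. cnj (w z) * w z) = (\<Sum>z\<in>B. of_real ((cmod (w z))\<^sup>2))"
    by (intro sum.cong refl) (simp only: complex_norm_square mult.commute)
  also have "\<dots> = of_real (\<Sum>z\<in>B. (cmod (w z))\<^sup>2)"
    by (rule of_real_sum[symmetric])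
  finally have "(\<Sum>z\<in>B. cnj (w z) * w z) = of_real (\<Sum>z\<in>B. (cmod (w z))\<^sup>2)" .
  moreover have "(\<Sum>z\<in>B. (cmod (w z))\<^sup>2) > 0"
    using assms by (intro sum_pos2) simp_all
  ultimately show ?thesis
    by (simp del: of_real_sum of_real_power)
qed

lemma mvec_pauli_on_mult:
  assumes "p > 0" and "finite K" and "y \<in> svecs p K" and "y' \<in> svecs p K"
  shows "mvec (fvec p K) (pauli_on p K y) (mvec (fvec p K) (pauli_on p K y') w) z =
    unit_root p (int (\<Sum>j\<in>K. snd y j * fst y' j)) * mvec (fvec p K) (pauli_on p K (sadd p y y')) w z"
proof -
  have "mmul (fvec p K) (pauli_on p K y) (pauli_on p K y') =
      (\<lambda>z x. unit_root p (int (\<Sum>j\<in>K. snd y j * fst y' j)) * pauli_on p K (sadd p y y') z x)"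
    using pauli_on_mult[OF assms] by (simp add: fun_eq_iff)
  then show ?thesis
    by (simp add: mvec_scale_matrix flip: mvec_mmul)
qed

lemma local_op_sum:
  "local_op p n J (\<lambda>x y. \<Sum>c\<in>S. f c * M c x y) x y = (\<Sum>c\<in>S. f c * local_op p n J (M c) x y)"
proof (cases "x \<in> fvec p {1..n} \<and> y \<in> fvec p {1..n} \<and> (\<forall>j. j \<notin> J \<longrightarrow> x j = y j)")
  case False
  then show ?thesis
    unfolding local_op_def if_not_P[OF False] by simp
qed (simp add: local_op_def)

lemma local_op_scale: "local_op p n J (\<lambda>x y. k * M x y) = (\<lambda>x y. k * local_op p n J M x y)"
  unfolding local_op_def by (intro ext) (simp only: mult_zero_right if_distrib[of "(*) k"])

lemma shift_eq_iff_restr: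
  assumes u: "supported_on J u" and y: "y \<in> fvec p K"
  shows "x = shift p u y \<longleftrightarrow> restr J x = shift p u (restr J y) \<and> (\<forall>j. j \<notin> J \<longrightarrow> x j = y j)"
proof -
  have off_J: "shift p u y j = y j" "shift p u (restr J y) j = 0" if "j \<notin> J" for j
  proof -
    have "y j mod p = y j"
      using y unfolding fvec_def by (cases "j \<in> K") auto
    then show "shift p u y j = y j" "shift p u (restr J y) j = 0"
      using u that unfolding shift_def restr_def supported_on_def by simp_all
  qed
  have on_J: "restr J (shift p u y) j = shift p u (restr J y) j" if "j \<in> J" for j
    using that unfolding shift_def restr_def by simp
  show ?thesis
  proof
    assume x: "x = shift p u y"
    have "restr J x j = shift p u (restr J y) j" for j
      using on_J[of j] off_J(2)[of j] unfolding x restr_def by (cases "j \<in> J") simp_all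
    then show "restr J x = shift p u (restr J y) \<and> (\<forall>j. j \<notin> J \<longrightarrow> x j = y j)"
      using off_J(1) unfolding x by blast
  next
    assume R: "restr J x = shift p u (restr J y) \<and> (\<forall>j. j \<notin> J \<longrightarrow> x j = y j)"
    have "x j = shift p u y j" for j
    proof (cases "j \<in> J")
      case True
      then show ?thesis
        using on_J[OF True] fun_cong[OF conjunct1[OF R], of j] unfolding restr_def by simp
    next
      case False
      then show ?thesis
        using off_J(1)[OF False] R by simp
    qed
    then show "x = shift p u y" ..
  qed
qed

lemma local_op_pauli_on:
  assumes J: "J \<subseteq> {1..n}" and u: "u \<in> svecs p J"
  shows "local_op p n J (pauli_on p J u) = pauli_on p {1..n} u"
proof (intro ext)
  fix x y
  show "local_op p n J (pauli_on p J u) x y = pauli_on p {1..n} u x y"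
  proof (cases "x \<in> fvec p {1..n} \<and> y \<in> fvec p {1..n}")
    case True
    have "restr J x \<in> fvec p J" and "restr J y \<in> fvec p J"
      using True J unfolding restr_def fvec_def by auto
    moreover have "(\<Sum>j\<in>J. snd u j * restr J y j) = (\<Sum>j\<in>{1..n}. snd u j * y j)"
      using svecs_supported_on[OF u] J unfolding restr_def supported_on_def
      by (simp add: sum.mono_neutral_left)
    moreover have "x = shift p u y \<longleftrightarrow>
        restr J x = shift p u (restr J y) \<and> (\<forall>j. j \<notin> J \<longrightarrow> x j = y j)"
      using shift_eq_iff_restr[OF svecs_supported_on[OF u]] True by blast
    ultimately show ?thesis
      using True unfolding local_op_def pauli_on_def
      by (cases "\<forall>j. j \<notin> J \<longrightarrow> x j = y j") (simp_all, blast)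
  next
    case False
    then show ?thesis
      unfolding local_op_def pauli_on_def by auto
  qed
qed

lemma local_op_pauli_on_mult:
  assumes J: "J \<subseteq> {1..n}" and p: "p > 0" and a: "a \<in> svecs p J" and c: "c \<in> svecs p J"
  shows "local_op p n J (mmul (fvec p J) (pauli_on p J a) (pauli_on p J c)) =
    mmul (fvec p {1..n}) (pauli_on p {1..n} a) (pauli_on p {1..n} c)"
proof -
  have "finite J"
    using J finite_subset by blast
  have aN: "a \<in> svecs p {1..n}" and cN: "c \<in> svecs p {1..n}"
    using svecs_mono[OF J p] a c by blast+
  have "(\<Sum>j\<in>J. snd a j * fst c j) = (\<Sum>j\<in>{1..n}. snd a j * fst c j)"
    using svecs_supported_on[OF c] J unfolding supported_on_def by (simp add: sum.mono_neutral_left)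
  moreover have "mmul (fvec p J) (pauli_on p J a) (pauli_on p J c) =
      (\<lambda>z x. unit_root p (int (\<Sum>j\<in>J. snd a j * fst c j)) * pauli_on p J (sadd p a c) z x)"
    using pauli_on_mult[OF p \<open>finite J\<close> a c] by (intro ext)
  moreover have "mmul (fvec p {1..n}) (pauli_on p {1..n} a) (pauli_on p {1..n} c) =
      (\<lambda>z x. unit_root p (int (\<Sum>j\<in>{1..n}. snd a j * fst c j)) * pauli_on p {1..n} (sadd p a c) z x)"
    using pauli_on_mult[OF p finite_atLeastAtMost aN cN] by (intro ext)
  ultimately show ?thesis
    by (simp add: local_op_scale local_op_pauli_on[OF J sadd_svecs[OF a c p]])
qed

lemma apply_local_kraus_gammaI_ketbra:
  "apply_local_kraus p n J As (gammaI p n I (ketbra phi)) x y =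
   (\<Sum>k<length As. (1 / of_nat p ^ (2 * card I)) * (\<Sum>e\<in>svecs p I.
      ketbra (mvec (fvec p {1..n}) (local_op p n J (As ! k))
        (mvec (fvec p {1..n}) (pauli_on p {1..n} e) phi)) x y))"
proof -
  have gamma: "gammaI p n I (ketbra phi) = (\<lambda>x y. (1 / of_nat p ^ (2 * card I)) *
      (\<Sum>e\<in>svecs p I. ketbra (mvec (fvec p {1..n}) (pauli_on p {1..n} e) phi) x y))"
    unfolding gammaI_def pauli_eq_pauli_on ketbra_sandwich ..
  show ?thesis
    unfolding apply_local_kraus_def gamma sandwich_sum ketbra_sandwich ..
qed

lemma kraus_TP_map:
  assumes "distinct vs"
    and TP: "\<And>x y. x \<in> fvec p J \<Longrightarrow> y \<in> fvec p J \<Longrightarrow>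
      (\<Sum>v\<in>set vs. mmul (fvec p J) (madj (A v)) (A v) x y) = ident (fvec p J) x y"
  shows "kraus_TP p J (map A vs)"
  unfolding kraus_TP_def mat_eq_def
proof (intro ballI)
  fix x y
  assume "x \<in> fvec p J" and "y \<in> fvec p J"
  then show "(\<Sum>k<length (map A vs). mmul (fvec p J) (madj (map A vs ! k)) (map A vs ! k) x y) =
      ident (fvec p J) x y"
    using TP sum_nth_distinct[OF assms(1), of "\<lambda>v. mmul (fvec p J) (madj (A v)) (A v) x y"] by simp
qed

lemma kraus_TP_ident:
  assumes "finite J"
  shows "kraus_TP p J [ident (fvec p J)]"
  unfolding kraus_TP_def mat_eq_def
proof (intro ballI)
  fix x y
  assume x: "x \<in> fvec p J" and "y \<in> fvec p J"
  have "mmul (fvec p J) (madj (ident (fvec p J))) (ident (fvec p J)) x y = ident (fvec p J) x y"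
    unfolding mmul_def madj_def
    by (subst sum_eq_single[OF finite_fvec[OF assms] x]) (auto simp: ident_def)
  then show "(\<Sum>k<length [ident (fvec p J)]. mmul (fvec p J) (madj ([ident (fvec p J)] ! k))
      ([ident (fvec p J)] ! k) x y) = ident (fvec p J) x y"
    by simp
qed

lemma apply_local_kraus_vanishing:
  assumes "\<forall>x\<in>fvec p {1..n}. v x = 0"
  shows "mat_eq (fvec p {1..n}) (apply_local_kraus p n J As (gammaI p n I (ketbra v))) (ketbra v)"
proof -
  have "mvec (fvec p {1..n}) M v = (\<lambda>_. 0)" and "mvec (fvec p {1..n}) M (\<lambda>_. 0) = (\<lambda>_. 0)" for M
    using assms unfolding mvec_def by (simp_all add: fun_eq_iff)
  then show ?thesis
    using assms unfolding mat_eq_def apply_local_kraus_gammaI_ketbra by (simp add: ketbra_def)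
qed

section \<open>Stabilizer codes\<close>

locale stabilizer_code =
  fixes p n :: nat and C :: "svec set" and lam :: "cmat \<Rightarrow> complex"
  assumes p_gt_1: "p > 1" and code: "is_code p n C"
begin

abbreviation "N \<equiv> {1..n}"

abbreviation "F \<equiv> fvec p {1..n}"

lemma p_pos: "p > 0"
  using p_gt_1 by simp

lemma finite_F: "finite F"
  by (simp add: finite_fvec)

lemma code_svecs: "C \<subseteq> svecs p N"
  using code unfolding is_code_def by blast

lemma finite_code: "finite C"
  using code_svecs finite_svecs[of N p] finite_subset by blast

lemma code_sadd: "u \<in> C \<Longrightarrow> v \<in> C \<Longrightarrow> sadd p u v \<in> C"
  using code unfolding is_code_def by blast

lemma szero_code: "szero \<in> C"
  using code unfolding is_code_def szero_def by blast

definition eigval :: "svec \<Rightarrow> complex" where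
  "eigval c = lam (pauli p n c)"

lemma stab_code_eigen:
  assumes "phi \<in> stab_code p n C lam" and "c \<in> C" and "x \<in> F"
  shows "mvec F (pauli_on p N c) phi x = eigval c * phi x"
  using assms stab_group.gen[OF assms(2)] unfolding stab_code_def eigval_def pauli_eq_pauli_on by blast

lemma pauli_error_eigen:
  assumes phi: "phi \<in> stab_code p n C lam" and c: "c \<in> C" and e: "e \<in> svecs p N" and x: "x \<in> F"
  shows "mvec F (pauli_on p N c) (mvec F (pauli_on p N e) phi) x =
    unit_root p (sform N e c) * eigval c * mvec F (pauli_on p N e) phi x"
proof -
  have cN: "c \<in> svecs p N"
    using c code_svecs by blast
  let ?ce = "int (\<Sum>j\<in>N. snd c j * fst e j)" and ?ec = "int (\<Sum>j\<in>N. snd e j * fst c j)"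
  have "unit_root p ?ec * mvec F (pauli_on p N (sadd p c e)) phi x =
      mvec F (pauli_on p N e) (mvec F (pauli_on p N c) phi) x"
    using mvec_pauli_on_mult[OF p_pos finite_atLeastAtMost e cN] by (simp add: sadd_commute)
  also have "\<dots> = mvec F (pauli_on p N e) (\<lambda>z. eigval c * phi z) x"
    by (rule arg_cong[where f = "\<lambda>w. w x"], rule mvec_cong, rule stab_code_eigen[OF phi c])
  also have "\<dots> = eigval c * mvec F (pauli_on p N e) phi x"
    by (rule mvec_scale_vector)
  finally have "mvec F (pauli_on p N (sadd p c e)) phi x =
      unit_root p (- ?ec) * eigval c * mvec F (pauli_on p N e) phi x"
    by (metis (no_types, lifting) cnj_unit_root cnj_unit_root_mult mult.assoc mult_1)
  moreover have "sform N e c = ?ce - ?ec"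
    unfolding sform_def by (simp add: sum_subtractf mult.commute)
  ultimately show ?thesis
    using mvec_pauli_on_mult[OF p_pos finite_atLeastAtMost cN e] by (simp add: mult_ac flip: unit_root_add)
qed

lemma eigval_unit:
  assumes phi: "phi \<in> stab_code p n C lam" and x: "x \<in> F" and "phi x \<noteq> 0" and c: "c \<in> C"
  shows "cnj (eigval c) * eigval c = 1"
proof -
  have cN: "c \<in> svecs p N"
    using c code_svecs by blast
  \<comment> \<open>\<open>phi\<close> as a matrix all of whose columns equal \<open>phi\<close>\<close>
  have "mvec F (pauli_on p N c) phi z = mmul F (pauli_on p N c) (\<lambda>a _. phi a) z undefined" for z
    unfolding mvec_def mmul_def ..
  then have "(\<Sum>z\<in>F. cnj (phi z) * phi z) =
      (\<Sum>z\<in>F. cnj (mvec F (pauli_on p N c) phi z) * mvec F (pauli_on p N c) phi z)"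
    using sum_cnj_mmul_unitary[OF finite_F pauli_on_unitary[OF p_pos finite_atLeastAtMost cN]] by simp
  also have "\<dots> = cnj (eigval c) * eigval c * (\<Sum>z\<in>F. cnj (phi z) * phi z)"
    using stab_code_eigen[OF phi c] by (simp add: sum_distrib_left mult_ac)
  finally have "(\<Sum>z\<in>F. cnj (phi z) * phi z) = cnj (eigval c) * eigval c * (\<Sum>z\<in>F. cnj (phi z) * phi z)" .
  then have "(\<Sum>z\<in>F. cnj (phi z) * phi z) = 0 \<or> cnj (eigval c) * eigval c = 1"
    by (simp only: mult_cancel_right1)
  then show ?thesis
    using sum_cnj_mult_self_nonzero[of F x phi, OF finite_F x \<open>phi x \<noteq> 0\<close>] by blast
qed

definition subcode :: "nat set \<Rightarrow> svec set" where
  "subcode K = {c \<in> C. supported_on K c}"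

lemma subcode_svecs: "K \<subseteq> N \<Longrightarrow> subcode K \<subseteq> svecs p K"
  using code_svecs unfolding subcode_def
  by (auto simp: svecs_supported_on_iff)

lemma finite_subcode: "finite (subcode K)"
  using finite_code unfolding subcode_def by simp

lemma subcode_sadd: "u \<in> subcode K \<Longrightarrow> v \<in> subcode K \<Longrightarrow> sadd p u v \<in> subcode K"
  using code_sadd[of u v] unfolding subcode_def supported_on_def sadd_def by simp

lemma szero_subcode: "szero \<in> subcode K"
  using szero_code unfolding subcode_def supported_on_def szero_def by simp

lemma card_subcode_pos: "card (subcode K) > 0"
  using finite_subcode szero_subcode card_gt_0_iff by blast

lemma sum_unit_root_sform_code:
  assumes y: "y \<in> svecs p N"
  shows "(\<Sum>c\<in>C. unit_root p (sform N y c)) = (if y \<in> sdual p n C then of_nat (card C) else 0)"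
proof -
  have "(\<Sum>c\<in>C. unit_root p (sform N y c)) =
      (if \<forall>c\<in>C. int p dvd sform N y c then of_nat (card C) else 0)"
    by (rule sum_unit_root_additive[OF p_pos finite_code code_svecs code_sadd sform_sadd_right])
  moreover have "y \<in> sdual p n C \<longleftrightarrow> (\<forall>c\<in>C. int p dvd sform N y c)"
    using y unfolding sdual_def symp_eq_sform_mod by (simp add: dvd_eq_mod_eq_0)
  ultimately show ?thesis
    by simp
qed

lemma sum_unit_root_sform_translates:
  assumes J: "J \<subseteq> N" and g: "g \<in> svecs p J" and orth: "\<forall>c\<in>subcode J. int p dvd sform N g c"
  shows "(\<Sum>h\<in>svecs p (N - J). \<Sum>c\<in>C. unit_root p (sform N (sadd p g h) c)) =
    of_nat (card (subcode J) * card (svecs p (N - J)))"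
proof -
  let ?H = "svecs p (N - J)"
  have "(\<Sum>h\<in>?H. \<Sum>c\<in>C. unit_root p (sform N (sadd p g h) c)) =
      (\<Sum>h\<in>?H. \<Sum>c\<in>C. unit_root p (sform N g c) * unit_root p (sform N h c - sform N h szero))"
    using unit_root_cong[OF p_pos sform_sadd_left] by (simp add: unit_root_add)
  also have "\<dots> = (\<Sum>c\<in>C. unit_root p (sform N g c) *
      (\<Sum>h\<in>?H. unit_root p (sform N h c - sform N h szero)))"
    by (subst sum.swap) (simp add: sum_distrib_left)
  also have "\<dots> = (\<Sum>c\<in>C. if c \<in> subcode J then of_nat (card ?H) else 0)"
  proof (rule sum.cong[OF refl])
    fix c
    assume c: "c \<in> C"
    then have cN: "c \<in> svecs p N"
      using code_svecs by blast
    have "c \<in> subcode J \<longleftrightarrow> (\<forall>j\<in>N - J. fst c j = fst szero j \<and> snd c j = snd szero j)"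
      using c svecs_supported_on[OF cN] unfolding subcode_def supported_on_def szero_def
      by (simp only: fst_conv snd_conv mem_Collect_eq Diff_iff) blast
    moreover have "c \<in> subcode J \<Longrightarrow> unit_root p (sform N g c) = 1"
      using orth unit_root_eq_1_iff[OF p_pos] by blast
    ultimately show "unit_root p (sform N g c) * (\<Sum>h\<in>?H. unit_root p (sform N h c - sform N h szero)) =
        (if c \<in> subcode J then of_nat (card ?H) else 0)"
      using sum_unit_root_sform_svecs[OF p_gt_1 finite_atLeastAtMost Diff_subset cN szero_svecs[OF p_pos]]
      by simp
  qed
  also have "\<dots> = (\<Sum>c\<in>{c \<in> C. c \<in> subcode J}. of_nat (card ?H))"
    by (rule sum.inter_filter[symmetric, OF finite_code])
  also have "{c \<in> C. c \<in> subcode J} = subcode J"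
    unfolding subcode_def by blast
  finally show ?thesis
    by simp
qed

lemma orthogonal_to_subcode_extends_to_dual:
  assumes J: "J \<subseteq> N" and g: "g \<in> svecs p J" and orth: "\<forall>c\<in>subcode J. int p dvd sform N g c"
  shows "\<exists>h\<in>svecs p (N - J). sadd p g h \<in> sdual p n C"
proof (rule ccontr)
  assume no_h: "\<not> ?thesis"
  have "(\<Sum>c\<in>C. unit_root p (sform N (sadd p g h) c)) = 0" if h: "h \<in> svecs p (N - J)" for h
  proof -
    have "g \<in> svecs p N" and "h \<in> svecs p N"
      using svecs_mono[OF J p_pos] svecs_mono[OF Diff_subset p_pos] g h by blast+
    then show ?thesis
      using sum_unit_root_sform_code[OF sadd_svecs[OF _ _ p_pos]] no_h h by simp
  qed
  then have "of_nat (card (subcode J) * card (svecs p (N - J))) = (0 :: complex)"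
    using sum_unit_root_sform_translates[OF assms] by simp
  then show False
    using card_subcode_pos[of J] card_svecs_pos[OF _ p_pos, of "N - J"] by simp
qed

end

section \<open>Local recovery\<close>

locale local_recovery = stabilizer_code +
  fixes I J :: "nat set"
  assumes I_subset_J: "I \<subseteq> J" and J_subset: "J \<subseteq> {1..n}"
    and shortening: "shorten I (puncture J (sdual p n C)) = shorten I C"
begin

abbreviation "S \<equiv> subcode J"

lemma finite_J: "finite J"
  using J_subset finite_subset by blast

lemma finite_I: "finite I"
  using I_subset_J finite_J finite_subset by blast

lemma svecs_I_J: "svecs p I \<subseteq> svecs p J"
  using svecs_mono[OF I_subset_J p_pos] .

lemma svecs_J_N: "svecs p J \<subseteq> svecs p N"
  using svecs_mono[OF J_subset p_pos] .

lemma subcode_svecs_J: "S \<subseteq> svecs p J"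
  using subcode_svecs[OF J_subset] .

lemma orthogonal_error_in_code:
  assumes f: "f \<in> svecs p I" and orth: "\<forall>c\<in>S. int p dvd sform N f c"
  shows "f \<in> C"
proof -
  have fJ: "f \<in> svecs p J"
    using f svecs_I_J by blast
  obtain h where h: "h \<in> svecs p (N - J)" and dual: "sadd p f h \<in> sdual p n C"
    using orthogonal_to_subcode_extends_to_dual[OF J_subset fJ orth] by blast
  have "proj J (sadd p f h) = f"
  proof -
    have "fst h j = 0 \<and> snd h j = 0" if "j \<in> J" for j
      using svecs_supported_on[OF h] that unfolding supported_on_def by blast
    moreover have "fst f j < p" "snd f j < p" for j
      using svecs_less[OF fJ p_pos] by simp_all
    ultimately show ?thesis
      using svecs_supported_on[OF fJ] unfolding proj_def sadd_def supported_on_def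
      by (simp add: prod_eq_iff fun_eq_iff)
  qed
  then have "f \<in> puncture J (sdual p n C)"
    using dual unfolding puncture_def by (metis image_eqI)
  moreover have "supported_on I f"
    using svecs_supported_on[OF f] .
  ultimately have "f = proj I f \<and> f \<in> puncture J (sdual p n C) \<and> supported_on I f"
    using proj_supported_on[of I f] by simp
  then have "f \<in> shorten I (puncture J (sdual p n C))"
    unfolding shorten_def supported_on_def by blast
  then have "f \<in> shorten I C"
    by (simp only: shortening)
  then obtain y where "y \<in> C" and "f = proj I y" and "supported_on I y"
    unfolding shorten_def supported_on_def by blast
  then show ?thesis
    using proj_supported_on by simp
qed

definition same_syndrome :: "svec \<Rightarrow> svec \<Rightarrow> bool" where
  "same_syndrome v e \<longleftrightarrow> (\<forall>c\<in>S. int p dvd (sform N e c - sform N v c))"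

definition correction :: "svec \<Rightarrow> svec" where
  "correction v = (if \<exists>e\<in>svecs p I. same_syndrome v e
     then SOME e. e \<in> svecs p I \<and> same_syndrome v e else szero)"

lemma correction_spec:
  assumes "\<exists>e\<in>svecs p I. same_syndrome v e"
  shows "correction v \<in> svecs p I \<and> same_syndrome v (correction v)"
proof -
  have "\<exists>e. e \<in> svecs p I \<and> same_syndrome v e"
    using assms by blast
  then have "(SOME e. e \<in> svecs p I \<and> same_syndrome v e) \<in> svecs p I \<and>
      same_syndrome v (SOME e. e \<in> svecs p I \<and> same_syndrome v e)"
    by (rule someI_ex)
  then show ?thesis
    unfolding correction_def using assms by simp
qed

lemma correction_svecs: "correction v \<in> svecs p I"
  using correction_spec szero_svecs[OF p_pos] unfolding correction_def by (cases "\<exists>e\<in>svecs p I. same_syndrome v e") auto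

lemma same_syndrome_correction:
  assumes "e \<in> svecs p I" and "same_syndrome v e"
  shows "same_syndrome v (correction v)"
  using correction_spec assms by blast

lemma correction_difference_in_code:
  assumes e: "e \<in> svecs p I" and "same_syndrome v e"
  shows "sadd p (sneg p (correction v)) e \<in> C"
proof (rule orthogonal_error_in_code)
  show "sadd p (sneg p (correction v)) e \<in> svecs p I"
    using sadd_svecs[OF sneg_svecs[OF correction_svecs] e p_pos] .
  show "\<forall>c\<in>S. int p dvd sform N (sadd p (sneg p (correction v)) e) c"
  proof
    fix c
    assume c: "c \<in> S"
    let ?r = "correction v"
    have cg: "[sform N (sadd p (sneg p ?r) e) c = - sform N ?r c + sform N e c] (mod int p)"
      using cong_trans[OF sform_sadd_left cong_add[OF sform_sneg_left[OF correction_svecs] cong_refl]] .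
    have "int p dvd (sform N e c - sform N v c)"
      and "int p dvd (sform N ?r c - sform N v c)"
      using assms same_syndrome_correction[OF assms] c unfolding same_syndrome_def by blast+
    then have "int p dvd ((sform N e c - sform N v c) - (sform N ?r c - sform N v c))"
      by (rule dvd_diff)
    then show "int p dvd sform N (sadd p (sneg p ?r) e) c"
      using cong_dvd_iff[OF cg] by (simp add: algebra_simps)
  qed
qed

lemma sum_unit_root_syndrome:
  "(\<Sum>c\<in>S. unit_root p (sform N e c - sform N v c)) = (if same_syndrome v e then of_nat (card S) else 0)"
  unfolding same_syndrome_def
proof (rule sum_unit_root_additive[OF p_pos finite_subcode subcode_svecs_J subcode_sadd])
  fix u w
  show "[sform N e (sadd p u w) - sform N v (sadd p u w) =
      sform N e u - sform N v u + (sform N e w - sform N v w)] (mod int p)"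
    using cong_diff[OF sform_sadd_right sform_sadd_right] by (simp add: algebra_simps)
qed

lemma card_same_syndrome:
  "card {v \<in> svecs p J. same_syndrome v e} * card S = card (svecs p J)"
proof -
  have "of_nat (card {v \<in> svecs p J. same_syndrome v e} * card S) =
      (\<Sum>v\<in>svecs p J. if same_syndrome v e then of_nat (card S) else (0 :: complex))"
    using finite_svecs[OF finite_J] by (simp add: sum.inter_filter[symmetric])
  also have "\<dots> = (\<Sum>v\<in>svecs p J. \<Sum>c\<in>S. unit_root p (sform N e c - sform N v c))"
    by (simp only: sum_unit_root_syndrome)
  also have "\<dots> = (\<Sum>c\<in>S. unit_root p (sform N e c) *
      (\<Sum>v\<in>svecs p J. unit_root p (sform N v szero - sform N v c)))"
    by (subst sum.swap) (simp add: sum_distrib_left flip: unit_root_add)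
  also have "\<dots> = (\<Sum>c\<in>S. if c = szero then of_nat (card (svecs p J)) else 0)"
  proof (rule sum.cong[OF refl])
    fix c
    assume c: "c \<in> S"
    then have "c = szero \<longleftrightarrow> (\<forall>j\<in>J. fst szero j = fst c j \<and> snd szero j = snd c j)"
      unfolding subcode_def supported_on_def szero_def by (auto simp: prod_eq_iff fun_eq_iff)
    moreover have "c \<in> svecs p N"
      using c subcode_svecs_J svecs_J_N by blast
    ultimately show "unit_root p (sform N e c) * (\<Sum>v\<in>svecs p J. unit_root p (sform N v szero - sform N v c)) =
        (if c = szero then of_nat (card (svecs p J)) else 0)"
      using sum_unit_root_sform_svecs[OF p_gt_1 finite_atLeastAtMost J_subset szero_svecs[OF p_pos]]
      by auto
  qed
  also have "\<dots> = of_nat (card (svecs p J))"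
    using finite_subcode szero_subcode by simp
  finally show ?thesis
    by (simp only: of_nat_eq_iff)
qed

definition kraus_scale :: complex where
  "kraus_scale = of_real (1 / sqrt (real (card S * card (svecs p J))))"

lemma kraus_scale_normalized:
  "cnj kraus_scale * kraus_scale * of_nat (card S) * of_nat (card (svecs p J)) = 1"
proof -
  define r where "r = real (card S * card (svecs p J))"
  have "r > 0"
    using card_subcode_pos[of J] card_svecs_pos[OF finite_J p_pos] unfolding r_def by simp
  then have "(1 / sqrt r) * (1 / sqrt r) * r = 1"
    by (simp add: field_simps)
  moreover have "cnj kraus_scale * kraus_scale * of_nat (card S) * of_nat (card (svecs p J)) =
      complex_of_real ((1 / sqrt r) * (1 / sqrt r) * r)"
    unfolding kraus_scale_def r_def
    by (simp only: complex_cnj_complex_of_real of_real_mult of_real_of_nat_eq of_nat_mult mult.assoc)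
  ultimately show ?thesis
    by simp
qed

definition syndrome_coeff :: "svec \<Rightarrow> svec \<Rightarrow> complex" where
  "syndrome_coeff v c = cnj (eigval c) * unit_root p (- sform N v c)"

text \<open>For unimodular eigenvalues, \<open>syndrome_op v\<close> is \<open>kraus_scale * card S\<close> times the
  projector onto the joint eigenspace of the \<open>E\<^sub>c\<close>, \<open>c \<in> S\<close>, with eigenvalues
  \<open>eigval c * unit_root p (sform N v c)\<close>.  Every syndrome is carried by
  \<open>card (svecs p J) div card S\<close> labels \<open>v\<close>, which \<open>kraus_scale\<close> compensates.\<close>

definition syndrome_op :: "svec \<Rightarrow> cmat" where
  "syndrome_op v = (\<lambda>x y. \<Sum>c\<in>S. kraus_scale * syndrome_coeff v c * pauli_on p J c x y)"

definition kraus_op :: "svec \<Rightarrow> cmat" where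
  "kraus_op v = mmul (fvec p J) (pauli_on p J (sneg p (correction v))) (syndrome_op v)"

lemma sum_syndrome_coeff:
  assumes unit: "\<forall>c\<in>S. cnj (eigval c) * eigval c = 1" and c: "c \<in> S" and c': "c' \<in> S"
  shows "(\<Sum>v\<in>svecs p J. cnj (syndrome_coeff v c) * syndrome_coeff v c') =
    (if c = c' then of_nat (card (svecs p J)) else 0)"
proof -
  have cN: "c \<in> svecs p N" "c' \<in> svecs p N"
    using c c' subcode_svecs_J svecs_J_N by blast+
  have "c = c' \<longleftrightarrow> (\<forall>j\<in>J. fst c j = fst c' j \<and> snd c j = snd c' j)"
    using c c' unfolding subcode_def supported_on_def by (auto simp: prod_eq_iff fun_eq_iff)
  then have "(\<Sum>v\<in>svecs p J. unit_root p (sform N v c - sform N v c')) =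
      (if c = c' then of_nat (card (svecs p J)) else 0)"
    using sum_unit_root_sform_svecs[OF p_gt_1 finite_atLeastAtMost J_subset cN] by simp
  moreover have "cnj (syndrome_coeff v c) * syndrome_coeff v c' =
      eigval c * cnj (eigval c') * unit_root p (sform N v c - sform N v c')" for v
    unfolding syndrome_coeff_def by (simp add: cnj_unit_root mult_ac flip: unit_root_add)
  moreover have "c = c' \<Longrightarrow> eigval c * cnj (eigval c') = 1"
    using unit c by (simp add: mult.commute)
  ultimately show ?thesis
    by (auto simp: sum_distrib_left[symmetric])
qed

lemma finite_fvec_J: "finite (fvec p J)"
  using finite_fvec[OF finite_J] .

lemma sneg_correction_svecs: "sneg p (correction v) \<in> svecs p J"
  using sneg_svecs[OF correction_svecs] svecs_I_J by blast

lemma sum_syndrome_op_products: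
  assumes unit: "\<forall>c\<in>S. cnj (eigval c) * eigval c = 1"
  shows "(\<Sum>v\<in>svecs p J. cnj (syndrome_op v w x) * syndrome_op v w y) =
    cnj kraus_scale * kraus_scale * of_nat (card (svecs p J)) *
      (\<Sum>c\<in>S. cnj (pauli_on p J c w x) * pauli_on p J c w y)"
proof -
  let ?k = "cnj kraus_scale * kraus_scale"
  let ?E = "\<lambda>c c'. cnj (pauli_on p J c w x) * pauli_on p J c' w y"
  have "(\<Sum>v\<in>svecs p J. cnj (syndrome_op v w x) * syndrome_op v w y) =
      (\<Sum>v\<in>svecs p J. \<Sum>c\<in>S. \<Sum>c'\<in>S. ?k * ?E c c' * (cnj (syndrome_coeff v c) * syndrome_coeff v c'))"
    unfolding syndrome_op_def cnj_sum complex_cnj_mult sum_product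
    by (intro sum.cong refl) (simp only: mult_ac)
  also have "\<dots> = (\<Sum>c\<in>S. \<Sum>c'\<in>S. ?k * ?E c c' *
      (\<Sum>v\<in>svecs p J. cnj (syndrome_coeff v c) * syndrome_coeff v c'))"
    by (subst sum.swap, rule sum.cong[OF refl], subst sum.swap) (simp only: sum_distrib_left)
  also have "\<dots> = (\<Sum>c\<in>S. ?k * ?E c c * of_nat (card (svecs p J)))"
  proof (rule sum.cong[OF refl])
    fix c
    assume c: "c \<in> S"
    show "(\<Sum>c'\<in>S. ?k * ?E c c' * (\<Sum>v\<in>svecs p J. cnj (syndrome_coeff v c) * syndrome_coeff v c')) =
        ?k * ?E c c * of_nat (card (svecs p J))"
      using c by (subst sum_eq_single[OF finite_subcode c]) (simp_all add: sum_syndrome_coeff[OF unit])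
  qed
  finally show ?thesis
    by (simp add: sum_distrib_left mult_ac)
qed

lemma kraus_ops_trace_preserving:
  assumes unit: "\<forall>c\<in>S. cnj (eigval c) * eigval c = 1"
    and x: "x \<in> fvec p J" and y: "y \<in> fvec p J"
  shows "(\<Sum>v\<in>svecs p J. mmul (fvec p J) (madj (kraus_op v)) (kraus_op v) x y) = ident (fvec p J) x y"
proof -
  let ?k = "cnj kraus_scale * kraus_scale"
  have "mmul (fvec p J) (madj (kraus_op v)) (kraus_op v) x y =
      (\<Sum>w\<in>fvec p J. cnj (syndrome_op v w x) * syndrome_op v w y)" for v
  proof -
    have "mmul (fvec p J) (madj (kraus_op v)) (kraus_op v) x y =
        (\<Sum>z\<in>fvec p J. cnj (kraus_op v z x) * kraus_op v z y)"
      unfolding mmul_def madj_def ..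
    also have "\<dots> = (\<Sum>w\<in>fvec p J. cnj (syndrome_op v w x) * syndrome_op v w y)"
      unfolding kraus_op_def
      by (rule sum_cnj_mmul_unitary[OF finite_fvec_J pauli_on_unitary[OF p_pos finite_J sneg_correction_svecs]])
    finally show ?thesis .
  qed
  then have "(\<Sum>v\<in>svecs p J. mmul (fvec p J) (madj (kraus_op v)) (kraus_op v) x y) =
      (\<Sum>w\<in>fvec p J. \<Sum>v\<in>svecs p J. cnj (syndrome_op v w x) * syndrome_op v w y)"
    by (simp add: sum.swap[of _ "svecs p J"])
  also have "\<dots> = ?k * of_nat (card (svecs p J)) *
      (\<Sum>c\<in>S. \<Sum>w\<in>fvec p J. cnj (pauli_on p J c w x) * pauli_on p J c w y)"
    by (simp add: sum_syndrome_op_products[OF unit] sum_distrib_left sum.swap[of _ "fvec p J"])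
  also have "\<dots> = ?k * of_nat (card (svecs p J)) * of_nat (card S) * (if x = y then 1 else 0)"
  proof -
    have "(\<Sum>c\<in>S. \<Sum>w\<in>fvec p J. cnj (pauli_on p J c w x) * pauli_on p J c w y) =
        (\<Sum>c\<in>S. if x = y then 1 else 0)"
      using pauli_on_unitary[OF p_pos finite_J _ x y] subcode_svecs_J by (intro sum.cong refl) blast
    then show ?thesis
      by simp
  qed
  also have "\<dots> = ident (fvec p J) x y"
    using kraus_scale_normalized x y unfolding ident_def by (simp add: mult_ac)
  finally show ?thesis .
qed

lemma local_kraus_op_apply:
  "mvec F (local_op p n J (kraus_op v)) w z =
    (\<Sum>c\<in>S. kraus_scale * syndrome_coeff v c *
      mvec F (pauli_on p N (sneg p (correction v))) (mvec F (pauli_on p N c) w) z)"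
proof -
  have "kraus_op v = (\<lambda>x y. \<Sum>c\<in>S. kraus_scale * syndrome_coeff v c *
      mmul (fvec p J) (pauli_on p J (sneg p (correction v))) (pauli_on p J c) x y)"
    unfolding kraus_op_def syndrome_op_def by (intro ext) (rule mmul_sum_right)
  then have "local_op p n J (kraus_op v) = (\<lambda>x y. \<Sum>c\<in>S. kraus_scale * syndrome_coeff v c *
      mmul F (pauli_on p N (sneg p (correction v))) (pauli_on p N c) x y)"
    by (intro ext) (simp add: local_op_sum local_op_pauli_on_mult[OF J_subset p_pos sneg_correction_svecs]
        subsetD[OF subcode_svecs_J] cong: sum.cong)
  then show ?thesis
    by (simp add: mvec_sum_matrix mvec_mmul)
qed

lemma local_kraus_op_on_error:
  assumes unit: "\<forall>c\<in>S. cnj (eigval c) * eigval c = 1" and phi: "phi \<in> stab_code p n C lam"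
    and e: "e \<in> svecs p I" and z: "z \<in> F"
  shows "mvec F (local_op p n J (kraus_op v)) (mvec F (pauli_on p N e) phi) z =
    (if same_syndrome v e then kraus_scale * of_nat (card S) else 0) *
      mvec F (pauli_on p N (sneg p (correction v))) (mvec F (pauli_on p N e) phi) z"
proof -
  let ?W = "mvec F (pauli_on p N e) phi" and ?R = "pauli_on p N (sneg p (correction v))"
  have eN: "e \<in> svecs p N"
    using e svecs_I_J svecs_J_N by blast
  have per_c: "syndrome_coeff v c * mvec F ?R (mvec F (pauli_on p N c) ?W) z =
      unit_root p (sform N e c - sform N v c) * mvec F ?R ?W z" if c: "c \<in> S" for c
  proof -
    have "c \<in> C"
      using c unfolding subcode_def by blast
    have "mvec F ?R (mvec F (pauli_on p N c) ?W) z =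
        mvec F ?R (\<lambda>x. unit_root p (sform N e c) * eigval c * ?W x) z"
      by (rule arg_cong[where f = "\<lambda>w. w z"], rule mvec_cong, rule pauli_error_eigen[OF phi \<open>c \<in> C\<close> eN])
    then have "syndrome_coeff v c * mvec F ?R (mvec F (pauli_on p N c) ?W) z =
        (syndrome_coeff v c * (unit_root p (sform N e c) * eigval c)) * mvec F ?R ?W z"
      by (simp only: mvec_scale_vector mult.assoc)
    also have "syndrome_coeff v c * (unit_root p (sform N e c) * eigval c) =
        (cnj (eigval c) * eigval c) * (unit_root p (sform N e c) * unit_root p (- sform N v c))"
      unfolding syndrome_coeff_def by (simp only: mult_ac)
    also have "\<dots> = unit_root p (sform N e c - sform N v c)"
      using unit c by (simp flip: unit_root_add)
    finally show ?thesis .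
  qed
  have "mvec F (local_op p n J (kraus_op v)) ?W z =
      (\<Sum>c\<in>S. kraus_scale * (syndrome_coeff v c * mvec F ?R (mvec F (pauli_on p N c) ?W) z))"
    by (simp only: local_kraus_op_apply mult.assoc)
  also have "\<dots> = (\<Sum>c\<in>S. kraus_scale * (unit_root p (sform N e c - sform N v c) * mvec F ?R ?W z))"
    using per_c by (intro sum.cong refl) simp
  also have "\<dots> = kraus_scale * (\<Sum>c\<in>S. unit_root p (sform N e c - sform N v c)) * mvec F ?R ?W z"
    by (simp add: sum_distrib_left sum_distrib_right mult.assoc)
  finally show ?thesis
    unfolding sum_unit_root_syndrome by simp
qed

lemma correction_on_error:
  assumes unit: "\<forall>c\<in>C. cnj (eigval c) * eigval c = 1" and phi: "phi \<in> stab_code p n C lam"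
    and e: "e \<in> svecs p I" and "same_syndrome v e"
  obtains \<theta> where "cnj \<theta> * \<theta> = 1"
    and "\<forall>z\<in>F. mvec F (pauli_on p N (sneg p (correction v))) (mvec F (pauli_on p N e) phi) z = \<theta> * phi z"
proof
  let ?r = "sneg p (correction v)"
  let ?\<omega> = "unit_root p (int (\<Sum>j\<in>N. snd ?r j * fst e j))"
  have f: "sadd p ?r e \<in> C"
    using correction_difference_in_code[OF e \<open>same_syndrome v e\<close>] .
  have "cnj (?\<omega> * eigval (sadd p ?r e)) * (?\<omega> * eigval (sadd p ?r e)) =
      (cnj ?\<omega> * ?\<omega>) * (cnj (eigval (sadd p ?r e)) * eigval (sadd p ?r e))"
    by (simp only: complex_cnj_mult mult_ac)
  then show "cnj (?\<omega> * eigval (sadd p ?r e)) * (?\<omega> * eigval (sadd p ?r e)) = 1"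
    using unit f by simp
  have rN: "?r \<in> svecs p N" and eN: "e \<in> svecs p N"
    using sneg_correction_svecs e svecs_I_J svecs_J_N by blast+
  show "\<forall>z\<in>F. mvec F (pauli_on p N ?r) (mvec F (pauli_on p N e) phi) z =
      (?\<omega> * eigval (sadd p ?r e)) * phi z"
  proof
    fix z
    assume z: "z \<in> F"
    have "mvec F (pauli_on p N ?r) (mvec F (pauli_on p N e) phi) z =
        ?\<omega> * mvec F (pauli_on p N (sadd p ?r e)) phi z"
      by (rule mvec_pauli_on_mult[OF p_pos finite_atLeastAtMost rN eN])
    also have "\<dots> = ?\<omega> * (eigval (sadd p ?r e) * phi z)"
      by (simp only: stab_code_eigen[OF phi f z])
    finally show "mvec F (pauli_on p N ?r) (mvec F (pauli_on p N e) phi) z =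
        (?\<omega> * eigval (sadd p ?r e)) * phi z"
      by (simp only: mult.assoc)
  qed
qed

lemma ketbra_kraus_op_on_error:
  assumes unit: "\<forall>c\<in>C. cnj (eigval c) * eigval c = 1" and phi: "phi \<in> stab_code p n C lam"
    and e: "e \<in> svecs p I" and x: "x \<in> F" and y: "y \<in> F"
  shows "ketbra (mvec F (local_op p n J (kraus_op v)) (mvec F (pauli_on p N e) phi)) x y =
    (if same_syndrome v e then cnj kraus_scale * kraus_scale * of_nat (card S) * of_nat (card S) else 0) *
      ketbra phi x y"
proof -
  let ?K = "mvec F (local_op p n J (kraus_op v)) (mvec F (pauli_on p N e) phi)"
  have unit_S: "\<forall>c\<in>S. cnj (eigval c) * eigval c = 1"
    using unit unfolding subcode_def by blast
  show ?thesis
  proof (cases "same_syndrome v e")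
    case True
    obtain \<theta> where \<theta>: "cnj \<theta> * \<theta> = 1"
      and recovered: "\<forall>z\<in>F. mvec F (pauli_on p N (sneg p (correction v))) (mvec F (pauli_on p N e) phi) z = \<theta> * phi z"
      using correction_on_error[OF unit phi e True] by blast
    have "?K z = (kraus_scale * of_nat (card S) * \<theta>) * phi z" if "z \<in> F" for z
      using local_kraus_op_on_error[OF unit_S phi e that] recovered that True by simp
    then have "ketbra ?K x y =
        (cnj kraus_scale * kraus_scale * of_nat (card S) * of_nat (card S)) * (cnj \<theta> * \<theta>) * ketbra phi x y"
      using x y unfolding ketbra_def by (simp only: complex_cnj_mult complex_cnj_of_nat mult_ac)
    then show ?thesis
      using True \<theta> by simp
  next
    case False
    then show ?thesis
      using local_kraus_op_on_error[OF unit_S phi e] x y unfolding ketbra_def by simp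
  qed
qed

lemma sum_same_syndrome_weight:
  "(\<Sum>v\<in>svecs p J. if same_syndrome v e
      then cnj kraus_scale * kraus_scale * of_nat (card S) * of_nat (card S) else 0) = 1"
proof -
  let ?syn = "{v \<in> svecs p J. same_syndrome v e}"
  let ?k = "cnj kraus_scale * kraus_scale * of_nat (card S) * of_nat (card S)"
  have "(\<Sum>v\<in>svecs p J. if same_syndrome v e then ?k else 0) = (\<Sum>v\<in>?syn. ?k)"
    by (rule sum.inter_filter[symmetric, OF finite_svecs[OF finite_J]])
  also have "\<dots> = cnj kraus_scale * kraus_scale * of_nat (card S) * of_nat (card ?syn * card S)"
    by (simp add: mult_ac)
  also have "\<dots> = 1"
    using kraus_scale_normalized by (simp only: card_same_syndrome)
  finally show ?thesis .
qed

lemma kraus_ops_recover: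
  assumes unit: "\<forall>c\<in>C. cnj (eigval c) * eigval c = 1"
    and vs: "distinct vs" "set vs = svecs p J"
    and phi: "phi \<in> stab_code p n C lam" and x: "x \<in> F" and y: "y \<in> F"
  shows "apply_local_kraus p n J (map kraus_op vs) (gammaI p n I (ketbra phi)) x y = ketbra phi x y"
proof -
  let ?g = "1 / of_nat p ^ (2 * card I) :: complex"
  let ?k = "cnj kraus_scale * kraus_scale * of_nat (card S) * of_nat (card S)"
  have "apply_local_kraus p n J (map kraus_op vs) (gammaI p n I (ketbra phi)) x y =
      (\<Sum>v\<in>svecs p J. ?g * (\<Sum>e\<in>svecs p I. (if same_syndrome v e then ?k else 0) * ketbra phi x y))"
    unfolding apply_local_kraus_gammaI_ketbra
    using sum_nth_distinct[OF vs(1), of "\<lambda>v. ?g * (\<Sum>e\<in>svecs p I. ketbra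
        (mvec F (local_op p n J (kraus_op v)) (mvec F (pauli_on p N e) phi)) x y)"]
      ketbra_kraus_op_on_error[OF unit phi _ x y] vs(2)
    by simp
  also have "\<dots> = ?g * (\<Sum>e\<in>svecs p I. \<Sum>v\<in>svecs p J. (if same_syndrome v e then ?k else 0) * ketbra phi x y)"
    by (simp only: sum_distrib_left) (rule sum.swap)
  also have "\<dots> = ?g * (\<Sum>e\<in>svecs p I. ketbra phi x y)"
    by (simp only: sum_distrib_right[symmetric] sum_same_syndrome_weight mult_1_left)
  also have "\<dots> = ketbra phi x y"
    using card_svecs[OF finite_I, of p] p_pos by simp
  finally show ?thesis .
qed

lemma exists_local_recovery:
  "\<exists>As. kraus_TP p J As \<and> (\<forall>v\<in>stab_code p n C lam.
     mat_eq F (apply_local_kraus p n J As (gammaI p n I (ketbra v))) (ketbra v))"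
proof (cases "\<exists>phi\<in>stab_code p n C lam. \<exists>x\<in>F. phi x \<noteq> 0")
  \<comment> \<open>the eigenvalues are unimodular only when \<open>Q(C)\<close> is nonzero\<close>
  case True
  then have unit: "\<forall>c\<in>C. cnj (eigval c) * eigval c = 1"
    using eigval_unit by blast
  then have "\<forall>c\<in>S. cnj (eigval c) * eigval c = 1"
    unfolding subcode_def by blast
  moreover obtain vs where vs: "distinct vs" "set vs = svecs p J"
    using finite_distinct_list[OF finite_svecs[OF finite_J]] by blast
  ultimately have "kraus_TP p J (map kraus_op vs)"
    using kraus_ops_trace_preserving by (intro kraus_TP_map) simp_all
  moreover have "mat_eq F (apply_local_kraus p n J (map kraus_op vs) (gammaI p n I (ketbra v))) (ketbra v)"
    if "v \<in> stab_code p n C lam" for v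
    unfolding mat_eq_def using kraus_ops_recover[OF unit vs that] by blast
  ultimately show ?thesis
    by blast
next
  case False
  then have "mat_eq F (apply_local_kraus p n J [ident (fvec p J)] (gammaI p n I (ketbra v))) (ketbra v)"
    if "v \<in> stab_code p n C lam" for v
    using that by (intro apply_local_kraus_vanishing) blast
  then show ?thesis
    using kraus_TP_ident[OF finite_J] by blast
qed

end

theorem proposition13:
  fixes p n :: nat and C :: "svec set" and I J :: "nat set"
    and lam :: "cmat \<Rightarrow> complex"
  assumes "prime p"
    and "symp_self_orth p n C"
    and "is_character p n C lam"
    and "I \<noteq> {}" and "I \<subset> J" and "J \<subset> {1..n}"
    and "shorten I (puncture J (sdual p n C)) = shorten I C"
  shows "locally_recoverable p n I J (stab_code p n C lam)"
proof -
  \<comment> \<open>of self-orthogonality only the linearity of \<open>C\<close> is used, and \<open>is_character p n C lam\<close> not at all\<close>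
  interpret local_recovery p n C lam I J
    using assms prime_gt_1_nat unfolding symp_self_orth_def by unfold_locales auto
  show ?thesis
    unfolding locally_recoverable_def using assms(4,5) exists_local_recovery by blast
qed

end
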